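(* Let $p$ be an odd prime, $m$ a positive integer, $G$ a cyclic group of order $p^m$ (written additively), and $\mathcal A=\mathcal O(K,G)$ the orbit S-ring of a subgroup $K\le\mathrm{Aut}(G)$. If $p$ divides $|K|$, then $G^{(p^{m-1})}\le\mathrm{rad}(\mathcal A)$. In particular, $\mathcal A$ is not free.
   Context: An S-ring over a finite group $G$ is a subring $\mathcal A\subseteq\mathbb{Z}[G]$ with $\mathbb{Z}$-basis $\{\underline X:X\in\mathcal S\}$ for a partition $\mathcal S$ of $G$ (the basic sets) with $\{0\}\in\mathcal S$ and $X^{(-1)}\in\mathcal S$ for all $X\in\mathcal S$, where $\underline X=\sum_{x\in X}x$. For $K\le\mathrm{Aut}(G)$, $\mathcal O(K,G)$ is the S-ring whose basic sets are the $K$-orbits on $G$. For $X\subseteq G$ and an integer $m$, $X^{(m)}=\{mx:x\in X\}$. The radical of a set $X$ is $\mathrm{rad}(X)=\{g\in G:g+X=X\}$. For an S-ring $\mathcal A$ over a cyclic group $G$, $\mathrm{rad}(\mathcal A)$ is $\mathrm{rad}(X)$ for any basic set $X$ generating $G$ (this does not depend on the choice of $X$), and $\mathcal A$ is free if $\mathrm{rad}(\mathcal A)=\{0\}$. *)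

theory Defs
  imports "HOL-Algebra.Algebra"
begin

text \<open>Groups are written multiplicatively (HOL-Algebra); the paper writes G additively.
  Basic sets of the orbit S-ring O(K,G): the K-orbits on G.\<close>
definition orbit_basic_sets :: "('a \<Rightarrow> 'a) set \<Rightarrow> ('a, 'b) monoid_scheme \<Rightarrow> 'a set set" where
  "orbit_basic_sets KK GG = {(\<lambda>\<sigma>. \<sigma> y) ` KK | y. y \<in> carrier GG}"

text \<open>X^(m) = {m x : x in X}, multiplicatively {x^m : x in X}.\<close>
definition set_pow :: "('a, 'b) monoid_scheme \<Rightarrow> nat \<Rightarrow> 'a set \<Rightarrow> 'a set" where
  "set_pow GG e XX = (\<lambda>y. y [^]\<^bsub>GG\<^esub> e) ` XX"

definition set_rad :: "('a, 'b) monoid_scheme \<Rightarrow> 'a set \<Rightarrow> 'a set" where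
  "set_rad GG XX = {g \<in> carrier GG. g <#\<^bsub>GG\<^esub> XX = XX}"

end

theory Submission
  imports Defs "HOL-Number_Theory.Number_Theory"
begin

(* A subgroup of order p of K (Sylow) gives an automorphism x \<mapsto> x^a with a^p = 1 but
   a \<noteq> 1 mod p^m. For odd p the geometric sum 1 + a + ... + a^(p-1) is p times a unit
   mod p, so a^p - 1 carries exactly one more factor p than a - 1; hence a = 1 + p^(m-1) u
   with p not dividing u, and the powers of a run through all residues 1 + p^(m-1) c.
   So K contains every automorphism x \<mapsto> x^(1 + p^(m-1) c). If b generates G and z = b^j,
   then z^(p^(m-1)) b = b^(1 + p^(m-1) j) lies in the K-orbit of b: translation by any
   p^(m-1)-th power preserves the orbit of a generator, and for a generator y the
   element y^(p^(m-1)) of the radical is not 1. *)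


lemma power_one_plus_cong:
  fixes d :: "'a :: unique_euclidean_semiring"
  shows "[(1 + d) ^ n = 1 + of_nat n * d] (mod d ^ 2)"
proof (induction n)
  case 0
  show ?case by simp
next
  case (Suc n)
  have "(1 + d) ^ Suc n = (1 + d) * (1 + d) ^ n" by simp
  also have "[\<dots> = (1 + d) * (1 + of_nat n * d)] (mod d ^ 2)"
    using Suc.IH by (rule cong_scalar_left)
  also have "(1 + d) * (1 + of_nat n * d) = (1 + of_nat (Suc n) * d) + of_nat n * d ^ 2"
    by (simp add: algebra_simps power2_eq_square)
  also have "[\<dots> = (1 + of_nat (Suc n) * d) + 0] (mod d ^ 2)"
    by (intro cong_add cong_refl) (simp add: cong_0_iff)
  finally show ?case by simp
qed

lemma sum_lessThan_odd:
  assumes "odd n"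
  shows "(\<Sum>i<n. int i) = int n * int (n div 2)"
proof -
  obtain r where n: "n = Suc (2 * r)" using assms oddE by fastforce
  have "2 * (\<Sum>i<n. int i) = 2 * (int n * int r)"
    using double_gauss_sum[of "2 * r", where 'a = int]
    by (simp add: n lessThan_Suc_atMost atLeast0AtMost algebra_simps)
  then show ?thesis by (simp add: n)
qed

lemma geometric_sum_cong_odd_modulus:
  fixes a :: int
  assumes "odd n" "[a = 1] (mod int n)"
  shows "[(\<Sum>i<n. a ^ i) = int n] (mod int n ^ 2)"
proof -
  obtain t where a: "a = 1 + int n * t"
    using assms(2) by (metis cong_iff_lin cong_sym)
  have "[(\<Sum>i<n. a ^ i) = (\<Sum>i<n. 1 + int i * (int n * t))] (mod int n ^ 2)"
  proof (rule cong_sum)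
    fix i
    have "[a ^ i = 1 + int i * (int n * t)] (mod (int n * t) ^ 2)"
      unfolding a using power_one_plus_cong[of "int n * t" i] by simp
    then show "[a ^ i = 1 + int i * (int n * t)] (mod int n ^ 2)"
      by (rule cong_dvd_modulus) (simp add: power_mult_distrib)
  qed
  also have "(\<Sum>i<n. 1 + int i * (int n * t)) = int n + int n ^ 2 * (t * int (n div 2))"
    using sum_lessThan_odd[OF assms(1)]
    by (simp add: sum.distrib flip: sum_distrib_right) (simp add: algebra_simps power2_eq_square)
  also have "[\<dots> = int n + 0] (mod int n ^ 2)"
    by (intro cong_add cong_refl) (simp add: cong_0_iff)
  finally show ?thesis by simp
qed

lemma cong_one_of_pow_self_cong_one:
  fixes a :: int
  assumes "odd n" "[a = 1] (mod int n)" "[a ^ n = 1] (mod int n ^ Suc k)"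
  shows "[a = 1] (mod int n ^ k)"
proof -
  define S where "S = (\<Sum>i<n. a ^ i)"
  have "[S = int n] (mod int n ^ 2)"
    unfolding S_def using assms(1,2) by (rule geometric_sum_cong_odd_modulus)
  then obtain w where "S = int n + int n ^ 2 * w"
    by (metis cong_iff_lin cong_sym)
  then have S: "S = int n * (1 + int n * w)"
    by (simp add: algebra_simps power2_eq_square)
  have "coprime (1 + int n * w) (int n)"
    using cong_imp_coprime[of 1 "1 + int n * w" "int n"] by (simp add: cong_iff_lin)
  then have cop: "coprime (int n ^ k) (1 + int n * w)"
    by (simp add: coprime_commute)
  have "int n ^ k * int n dvd a ^ n - 1"
    using assms(3) by (simp add: cong_iff_dvd_diff mult.commute)
  also have "a ^ n - 1 = (a - 1) * (1 + int n * w) * int n"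
    using power_diff_1_eq[of a n] S S_def by (simp add: algebra_simps)
  finally have "int n ^ k dvd (a - 1) * (1 + int n * w)"
    using assms(1) by auto
  then show ?thesis
    using cop by (simp add: coprime_dvd_mult_left_iff cong_iff_dvd_diff)
qed

lemma pow_prime_cong_self:
  fixes a p :: nat
  assumes "Factorial_Ring.prime p"
  shows "[a ^ p = a] (mod p)"
proof (cases "p dvd a")
  case True
  then have "[a ^ p = 0] (mod p)" "[a = 0] (mod p)"
    using assms by (simp_all add: cong_0_iff prime_dvd_power_iff prime_gt_0_nat)
  then show ?thesis by (metis cong_sym cong_trans)
next
  case False
  have "[a ^ (p - 1) * a = 1 * a] (mod p)"
    using fermat_theorem[OF assms False] by (rule cong_scalar_right)
  moreover have "a ^ (p - 1) * a = a ^ p"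
    using prime_gt_0_nat[OF assms] by (rule power_minus_mult)
  ultimately show ?thesis
    by simp
qed

lemma exists_pow_cong_one_plus_prime_power:
  fixes a p l c :: nat
  assumes "Factorial_Ring.prime p" "l \<noteq> 0"
    and "[a = 1] (mod p ^ l)" "\<not> [a = 1] (mod p ^ Suc l)"
  shows "\<exists>k. [a ^ k = 1 + p ^ l * c] (mod p ^ Suc l)"
proof -
  have "p ^ l \<noteq> 1"
    using prime_gt_1_nat[OF assms(1)] assms(2) by simp
  then obtain u where a: "a = 1 + p ^ l * u"
    using assms(3) by (metis cong_to_1'_nat mult.commute)
  have "\<not> p dvd u"
  proof
    assume "p dvd u"
    then have "[1 + p ^ l * u = 1 + 0] (mod p ^ Suc l)"
      by (intro cong_add cong_refl) (simp add: cong_0_iff mult_dvd_mono)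
    with assms(4) show False
      by (simp add: a)
  qed
  then have "coprime u p"
    using assms(1) by (simp add: prime_imp_coprime coprime_commute)
  then obtain s where s: "[u * s = 1] (mod p)"
    using cong_solve_coprime_nat by auto
  have "[s * c * u = c] (mod p)"
    using cong_scalar_right[OF s, of c] by (simp add: ac_simps)
  then have "[p ^ l * (s * c * u) = p ^ l * c] (mod p ^ l * p)"
    by (rule cong_cmult_leftI)
  then have c: "[p ^ l * (s * c * u) = p ^ l * c] (mod p ^ Suc l)"
    by (simp only: power_Suc2)
  have "p ^ Suc l dvd p ^ (2 * l)"
    using assms(2) by (intro le_imp_power_dvd) simp
  then have "p ^ Suc l dvd (p ^ l * u) ^ 2"
    by (simp add: power_mult_distrib dvd_mult2 mult.commute flip: power_mult)
  then have "[a ^ (s * c) = 1 + (s * c) * (p ^ l * u)] (mod p ^ Suc l)"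
    using power_one_plus_cong[of "p ^ l * u" "s * c"] by (simp add: a cong_dvd_modulus_nat)
  also have "(s * c) * (p ^ l * u) = p ^ l * (s * c * u)"
    by (simp add: ac_simps)
  also have "[1 + p ^ l * (s * c * u) = 1 + p ^ l * c] (mod p ^ Suc l)"
    using c by (intro cong_add cong_refl)
  finally have "[a ^ (s * c) = 1 + p ^ l * c] (mod p ^ Suc l)" .
  then show ?thesis ..
qed

lemma exists_pow_cong_one_plus_of_pow_prime_cong_one:
  fixes a p m c :: nat
  assumes "Factorial_Ring.prime p" "odd p"
    and "[a ^ p = 1] (mod p ^ m)" "\<not> [a = 1] (mod p ^ m)"
  shows "\<exists>k. [a ^ k = 1 + p ^ (m - 1) * c] (mod p ^ m)"
proof -
  obtain l where m: "m = Suc l"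
    using assms(4) by (cases m) auto
  have "[a ^ p = 1] (mod p)"
    using assms(3) by (rule cong_dvd_modulus_nat) (simp add: m)
  then have "[a = 1] (mod p)"
    using pow_prime_cong_self[OF assms(1), of a] by (metis cong_sym cong_trans)
  then have "[int a = 1] (mod int p ^ l)"
    using cong_one_of_pow_self_cong_one[OF assms(2), of "int a" l] assms(3) m
    by (metis cong_int_iff of_nat_1 of_nat_power)
  then have "[a = 1] (mod p ^ l)"
    by (metis cong_int_iff of_nat_1 of_nat_power)
  moreover have "l \<noteq> 0"
    using \<open>[a = 1] (mod p)\<close> assms(4) m by (cases l) auto
  ultimately show ?thesis
    using exists_pow_cong_one_plus_prime_power[OF assms(1)] assms(4) unfolding m by auto
qed

definition pow_map :: "('a, 'b) monoid_scheme \<Rightarrow> nat \<Rightarrow> 'a \<Rightarrow> 'a" where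
  "pow_map G n = (\<lambda>x\<in>carrier G. x [^]\<^bsub>G\<^esub> n)"

context group
begin

lemma nat_pow_eq_iff_cong_ord:
  assumes "x \<in> carrier G"
  shows "x [^] (i::nat) = x [^] (j::nat) \<longleftrightarrow> [i = j] (mod ord x)"
proof -
  have "x [^] i = x [^] j \<longleftrightarrow> x [^] int j = x [^] int i"
    by (auto simp: int_pow_int)
  also have "\<dots> \<longleftrightarrow> [int i = int j] (mod int (ord x))"
    using int_pow_eq[OF assms] by (simp add: cong_iff_dvd_diff)
  finally show ?thesis
    by (simp add: cong_int_iff)
qed

lemma cyclic_group_obtain_generator:
  assumes "cyclic_group G"
  obtains y where "y \<in> carrier G" "generate G {y} = carrier G"
  using assms unfolding cyclic_group_def
  by (metis carrier_subgroup_generated inf.absorb2 empty_subsetI insert_subset)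

lemma ord_generator:
  assumes "y \<in> carrier G" "generate G {y} = carrier G"
  shows "ord y = order G"
  using generate_pow_card[OF assms(1)] assms(2) by (simp add: order_def)

lemma pow_map_eq_iff_cong:
  assumes "cyclic_group G" "finite (carrier G)"
  shows "pow_map G a = pow_map G b \<longleftrightarrow> [a = b] (mod order G)"
proof
  obtain y where y: "y \<in> carrier G" "generate G {y} = carrier G"
    using assms(1) by (rule cyclic_group_obtain_generator)
  assume "pow_map G a = pow_map G b"
  then have "y [^] a = y [^] b"
    using y(1) unfolding pow_map_def by (metis restrict_apply')
  then show "[a = b] (mod order G)"
    using y by (simp add: nat_pow_eq_iff_cong_ord ord_generator)
next
  assume ab: "[a = b] (mod order G)"
  show "pow_map G a = pow_map G b"
    unfolding pow_map_def
  proof (rule restrict_ext)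
    fix x assume x: "x \<in> carrier G"
    have "[a = b] (mod ord x)"
      using ab ord_dvd_group_order[OF x] by (rule cong_dvd_modulus_nat)
    then show "x [^] a = x [^] b"
      using x by (simp add: nat_pow_eq_iff_cong_ord)
  qed
qed

lemma carrier_AutoGroup: "carrier (AutoGroup G) = auto G"
  by (simp add: AutoGroup_def)

lemma one_AutoGroup: "\<one>\<^bsub>AutoGroup G\<^esub> = pow_map G 1"
  by (auto simp: AutoGroup_def BijGroup_def pow_map_def intro!: restrict_ext)

lemma mult_AutoGroup:
  assumes "\<rho> \<in> auto G" "\<tau> \<in> auto G"
  shows "\<rho> \<otimes>\<^bsub>AutoGroup G\<^esub> \<tau> = compose (carrier G) \<rho> \<tau>"
  using assms by (simp add: AutoGroup_def BijGroup_def auto_def)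

lemma mult_AutoGroup_pow_map:
  assumes "pow_map G a \<in> auto G" "pow_map G b \<in> auto G"
  shows "pow_map G a \<otimes>\<^bsub>AutoGroup G\<^esub> pow_map G b = pow_map G (a * b)"
  using assms
  by (auto simp: mult_AutoGroup pow_map_def compose_def nat_pow_pow mult.commute intro!: restrict_ext)

lemma pow_AutoGroup_pow_map:
  assumes "pow_map G a \<in> auto G"
  shows "pow_map G a [^]\<^bsub>AutoGroup G\<^esub> k = pow_map G (a ^ k)"
proof (induction k)
  case 0
  show ?case by (simp add: one_AutoGroup)
next
  case (Suc k)
  have "pow_map G (a ^ k) \<in> auto G"
    using monoid.nat_pow_closed[OF group.is_monoid[OF AutoGroup], of "pow_map G a" k] assms Suc.IH
    by (simp add: carrier_AutoGroup)
  then show ?case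
    using assms Suc.IH by (simp add: mult_AutoGroup_pow_map mult.commute)
qed

lemma auto_cyclic_obtain_pow_map:
  assumes "cyclic_group G" "finite (carrier G)" "\<tau> \<in> auto G"
  obtains a where "\<tau> = pow_map G a"
proof -
  obtain y where y: "y \<in> carrier G" "generate G {y} = carrier G"
    using assms(1) by (rule cyclic_group_obtain_generator)
  have powers: "carrier G = {y [^] k | k. k \<in> (UNIV :: nat set)}"
    using generate_pow_on_finite_carrier[OF assms(2) y(1)] y(2) by simp
  have hom: "\<tau> \<in> hom G G" and ext: "\<tau> \<in> extensional (carrier G)"
    using assms(3) by (auto simp: auto_def Bij_def)
  obtain a :: nat where a: "\<tau> y = y [^] a"
    using powers hom_in_carrier[OF hom y(1)] by blast
  have "\<tau> = pow_map G a"
    unfolding pow_map_def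
  proof (rule extensionalityI[OF ext])
    fix x assume "x \<in> carrier G"
    then obtain k where x: "x = y [^] (k::nat)"
      using powers by auto
    have "\<tau> x = (\<tau> y) [^] k"
      using hom_nat_pow[OF hom y(1)] x by (simp add: is_group)
    then show "\<tau> x = (\<lambda>x\<in>carrier G. x [^] a) x"
      using x y(1) by (simp add: a nat_pow_pow mult.commute)
  qed auto
  then show ?thesis ..
qed

lemma finite_auto:
  assumes "finite (carrier G)"
  shows "finite (auto G)"
proof (rule finite_subset)
  show "auto G \<subseteq> carrier G \<rightarrow>\<^sub>E carrier G"
    by (auto simp: auto_def PiE_def dest: Bij_imp_funcset Bij_imp_extensional)
  show "finite (carrier G \<rightarrow>\<^sub>E carrier G)"
    using assms by (intro finite_PiE) auto
qed

lemma obtain_nontrivial_pow_prime_eq_one: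
  assumes "finite (carrier G)" "Factorial_Ring.prime p" "p dvd order G"
  obtains x where "x \<in> carrier G" "x \<noteq> \<one>" "x [^] p = \<one>"
proof -
  obtain q where q: "order G = p ^ 1 * q"
    using assms(3) by auto
  obtain H where H: "subgroup H G" "card H = p"
    using sylow_thm[OF assms(2) is_group q assms(1)] by auto
  interpret H: group "G\<lparr>carrier := H\<rparr>"
    using subgroup.subgroup_is_group[OF H(1) is_group] .
  have "\<not> H \<subseteq> {\<one>}"
  proof
    assume "H \<subseteq> {\<one>}"
    then have "card H \<le> 1"
      using card_mono[of "{\<one>}" H] by simp
    then show False
      using H(2) prime_gt_1_nat[OF assms(2)] by simp
  qed
  then obtain x where x: "x \<in> H" "x \<noteq> \<one>"
    by blast
  have "x [^] p = \<one>"
    using H.pow_order_eq_1[of x] x(1) H(2) by (simp add: order_def flip: nat_pow_consistent)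
  then show ?thesis
    using that x subgroup.subset[OF H(1)] by blast
qed

lemma auto_generator_image:
  assumes "\<tau> \<in> auto G" "y \<in> carrier G" "generate G {y} = carrier G"
  shows "generate G {\<tau> y} = carrier G"
proof -
  interpret \<tau>: group_hom G G \<tau>
    using assms(1) by (simp add: group_hom_def group_hom_axioms_def is_group auto_def)
  have "generate G (\<tau> ` {y}) = \<tau> ` generate G {y}"
    using assms(2) by (intro \<tau>.generate_img) simp
  then show ?thesis
    using assms(1,3) by (simp add: auto_def Bij_def bij_betw_def)
qed

lemma generator_of_generating_orbit:
  assumes "cyclic_group G" "finite (carrier G)" "K \<subseteq> auto G" "y \<in> carrier G"
    and "generate G ((\<lambda>\<tau>. \<tau> y) ` K) = carrier G"
  shows "generate G {y} = carrier G"
proof -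
  have "(\<lambda>\<tau>. \<tau> y) ` K \<subseteq> generate G {y}"
  proof
    fix b assume "b \<in> (\<lambda>\<tau>. \<tau> y) ` K"
    then obtain \<tau> where \<tau>: "\<tau> \<in> K" "b = \<tau> y" by blast
    then obtain a where "\<tau> = pow_map G a"
      using auto_cyclic_obtain_pow_map assms(1-3) by blast
    then have "b = y [^] int a"
      using \<tau>(2) assms(4) by (simp add: pow_map_def int_pow_int)
    then show "b \<in> generate G {y}"
      using generate_pow[OF assms(4)] by auto
  qed
  then have "generate G ((\<lambda>\<tau>. \<tau> y) ` K) \<subseteq> generate G {y}"
    using assms(4) by (intro generate_subgroup_incl generate_is_subgroup) auto
  then show ?thesis
    using generate_incl[of "{y}"] assms(4,5) by auto
qed

lemma set_rad_memI:
  assumes "S \<subseteq> carrier G" "h \<in> carrier G"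
    and "\<And>x. x \<in> S \<Longrightarrow> h \<otimes> x \<in> S" "\<And>x. x \<in> S \<Longrightarrow> inv h \<otimes> x \<in> S"
  shows "h \<in> set_rad G S"
proof -
  have "x \<in> h <# S" if "x \<in> S" for x
  proof -
    have "x = h \<otimes> (inv h \<otimes> x)"
      using assms(1,2) that by (auto simp: m_assoc[symmetric])
    then show ?thesis
      using assms(4)[OF that] unfolding l_coset_def by blast
  qed
  moreover have "h <# S \<subseteq> S"
    using assms(3) unfolding l_coset_def by blast
  ultimately show ?thesis
    using assms(2) unfolding set_rad_def by blast
qed

lemma pow_mult_mem_orbit:
  assumes "finite (carrier G)" "subgroup K (AutoGroup G)"
    and "y \<in> carrier G" "generate G {y} = carrier G"
    and "\<And>j. pow_map G (1 + e * j) \<in> K"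
    and "z \<in> carrier G" "b \<in> (\<lambda>\<tau>. \<tau> y) ` K"
  shows "z [^] e \<otimes> b \<in> (\<lambda>\<tau>. \<tau> y) ` K"
proof -
  have K_auto: "K \<subseteq> auto G"
    using subgroup.subset[OF assms(2)] by (simp add: carrier_AutoGroup)
  obtain \<tau> where \<tau>: "\<tau> \<in> K" "b = \<tau> y"
    using assms(7) by blast
  have gen_b: "generate G {b} = carrier G"
    using auto_generator_image[OF _ assms(3,4)] \<tau> K_auto by blast
  then have b: "b \<in> carrier G"
    using generate.incl[of b "{b}" G] by blast
  obtain j :: nat where z: "z = b [^] j"
    using generate_pow_on_finite_carrier[OF assms(1) b] gen_b assms(6) by auto
  define \<rho> where "\<rho> = pow_map G (1 + e * j)"
  have "z [^] e \<otimes> b = b [^] (j * e) \<otimes> b [^] (1::nat)"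
    using b by (simp add: z nat_pow_pow)
  also have "\<dots> = \<rho> b"
    using b by (simp add: \<rho>_def pow_map_def nat_pow_mult mult.commute)
  also have "\<dots> = (\<rho> \<otimes>\<^bsub>AutoGroup G\<^esub> \<tau>) y"
  proof -
    have "\<rho> \<in> auto G" "\<tau> \<in> auto G"
      using assms(5) \<tau>(1) K_auto by (auto simp: \<rho>_def)
    then show ?thesis
      using assms(3) \<tau>(2) by (simp add: mult_AutoGroup compose_def)
  qed
  also have "\<dots> \<in> (\<lambda>\<tau>. \<tau> y) ` K"
    using subgroup.m_closed[OF assms(2) assms(5) \<tau>(1)] by (simp add: \<rho>_def)
  finally show ?thesis .
qed

lemma set_pow_subset_set_rad_orbit:
  assumes "finite (carrier G)" "subgroup K (AutoGroup G)"
    and "y \<in> carrier G" "generate G {y} = carrier G"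
    and "\<And>j. pow_map G (1 + e * j) \<in> K"
  shows "set_pow G e (carrier G) \<subseteq> set_rad G ((\<lambda>\<tau>. \<tau> y) ` K)"
proof
  fix h assume "h \<in> set_pow G e (carrier G)"
  then obtain z where z: "z \<in> carrier G" "h = z [^] e"
    unfolding set_pow_def by blast
  show "h \<in> set_rad G ((\<lambda>\<tau>. \<tau> y) ` K)"
  proof (rule set_rad_memI)
    show "(\<lambda>\<tau>. \<tau> y) ` K \<subseteq> carrier G"
      using subgroup.subset[OF assms(2)] assms(3)
      by (auto simp: carrier_AutoGroup auto_def hom_in_carrier)
    show "h \<in> carrier G"
      using z by simp
    show "h \<otimes> b \<in> (\<lambda>\<tau>. \<tau> y) ` K" if "b \<in> (\<lambda>\<tau>. \<tau> y) ` K" for b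
      using pow_mult_mem_orbit[OF assms z(1) that] z(2) by simp
    have "inv h = inv z [^] e"
      using z by (simp add: nat_pow_inv)
    then show "inv h \<otimes> b \<in> (\<lambda>\<tau>. \<tau> y) ` K" if "b \<in> (\<lambda>\<tau>. \<tau> y) ` K" for b
      using pow_mult_mem_orbit[OF assms inv_closed[OF z(1)] that] by simp
  qed
qed

lemma pow_map_one_plus_mem_subgroup:
  assumes "Factorial_Ring.prime p" "odd p" "cyclic_group G" "finite (carrier G)"
    and "order G = p ^ m" "subgroup K (AutoGroup G)" "p dvd card K"
  shows "pow_map G (1 + p ^ (m - 1) * c) \<in> K"
proof -
  let ?A = "AutoGroup G"
  interpret A: group ?A
    by (rule AutoGroup)
  interpret K: group "?A\<lparr>carrier := K\<rparr>"
    using subgroup.subgroup_is_group[OF assms(6) AutoGroup] .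
  have K_auto: "K \<subseteq> auto G"
    using subgroup.subset[OF assms(6)] by (simp add: carrier_AutoGroup)
  then have "finite K"
    using finite_auto[OF assms(4)] by (rule finite_subset)
  then obtain \<sigma> where \<sigma>: "\<sigma> \<in> K" "\<sigma> \<noteq> \<one>\<^bsub>?A\<^esub>" "\<sigma> [^]\<^bsub>?A\<^esub> p = \<one>\<^bsub>?A\<^esub>"
    using K.obtain_nontrivial_pow_prime_eq_one[OF _ assms(1)] assms(7)
    by (auto simp: order_def simp flip: A.nat_pow_consistent)
  obtain a where a: "\<sigma> = pow_map G a"
    using auto_cyclic_obtain_pow_map[OF assms(3,4)] \<sigma>(1) K_auto by blast
  have "[a ^ p = 1] (mod p ^ m)" "\<not> [a = 1] (mod p ^ m)"
    using \<sigma>(1-3) K_auto assms(3-5)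
    by (auto simp: a pow_AutoGroup_pow_map one_AutoGroup pow_map_eq_iff_cong)
  then obtain k where "[a ^ k = 1 + p ^ (m - 1) * c] (mod p ^ m)"
    using exists_pow_cong_one_plus_of_pow_prime_cong_one[OF assms(1,2)] by blast
  then have "pow_map G (1 + p ^ (m - 1) * c) = \<sigma> [^]\<^bsub>?A\<^esub> k"
    using \<sigma>(1) K_auto assms(3-5)
    by (auto simp: a pow_AutoGroup_pow_map pow_map_eq_iff_cong cong_sym_eq)
  also have "\<dots> \<in> K"
    using K.nat_pow_closed[of \<sigma> k] \<sigma>(1) by (simp flip: A.nat_pow_consistent)
  finally show ?thesis .
qed

end

theorem lemma4p7:
  fixes G :: "('a, 'b) monoid_scheme" and K :: "('a \<Rightarrow> 'a) set" and p m :: nat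
  assumes "Factorial_Ring.prime p" and "odd p" and "m > 0"
    and "group G" and "cyclic_group G" and "finite (carrier G)" and "order G = p ^ m"
    and "subgroup K (AutoGroup G)"
    and "p dvd card K"
  shows "\<forall>B \<in> orbit_basic_sets K G. generate G B = carrier G \<longrightarrow>
           (set_pow G (p ^ (m - 1)) (carrier G) \<subseteq> set_rad G B \<and> set_rad G B \<noteq> {\<one>\<^bsub>G\<^esub>})"
proof (intro ballI impI)
  interpret group G by fact
  fix B assume "B \<in> orbit_basic_sets K G" and gen_B: "generate G B = carrier G"
  then obtain y where y: "y \<in> carrier G" and B: "B = (\<lambda>\<tau>. \<tau> y) ` K"
    unfolding orbit_basic_sets_def by blast
  have "K \<subseteq> auto G"
    using subgroup.subset[OF assms(8)] by (simp add: carrier_AutoGroup)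
  then have gen_y: "generate G {y} = carrier G"
    using generator_of_generating_orbit assms(5,6) y gen_B B by blast
  have rad: "set_pow G (p ^ (m - 1)) (carrier G) \<subseteq> set_rad G B"
    using set_pow_subset_set_rad_orbit[OF assms(6,8) y gen_y] B
      pow_map_one_plus_mem_subgroup[OF assms(1,2,5,6,7,8,9)] by blast
  have "\<not> p ^ m dvd p ^ (m - 1)"
    using assms(3) prime_gt_1_nat[OF assms(1)] by (simp add: dvd_power_iff_le)
  then have "y [^]\<^bsub>G\<^esub> p ^ (m - 1) \<noteq> \<one>\<^bsub>G\<^esub>"
    using y gen_y assms(7) by (simp add: pow_eq_id ord_generator)
  moreover have "y [^]\<^bsub>G\<^esub> p ^ (m - 1) \<in> set_rad G B"
    using rad y unfolding set_pow_def by blast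
  ultimately show "set_pow G (p ^ (m - 1)) (carrier G) \<subseteq> set_rad G B \<and> set_rad G B \<noteq> {\<one>\<^bsub>G\<^esub>}"
    using rad by blast
qed

end
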